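(* Let $X$ be a linear topological space, $\mathbf{S}$ a countable family of seminorms on $X$ separating points of $X$, and $\tau$ the topology on $X$ generated by $\mathbf{S}$. Let $Y\subseteq X$ be compact in $\tau$, and let $f:Y\to Y$ be a closed mapping with respect to $\tau$ such that $\lim_{n\to\infty}\mathbf{s}(f^n(x)-f^n(y))=0$ for each $\mathbf{s}\in\mathbf{S}$ and each $x,y\in Y$. Then $f$ has a unique fixed point in $Y$.
   Context: The topology generated by a family of seminorms $\mathbf{S}$ has as base the sets $\{z\in X:\mathbf{s}_i(x-z)<\delta,\ i=1,\dots,k\}$ for $x\in X$, finitely many $\mathbf{s}_1,\dots,\mathbf{s}_k\in\mathbf{S}$, and $\delta>0$. A mapping is closed if it maps closed sets to closed sets (continuity is not assumed). $f^n$ denotes the $n$-fold iterate of $f$. *)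

theory Defs
  imports "HOL-Analysis.Analysis"
begin

definition seminorm :: "('a::real_vector \<Rightarrow> real) \<Rightarrow> bool" where
  "seminorm s \<longleftrightarrow> (\<forall>x y. s (x + y) \<le> s x + s y) \<and> (\<forall>c x. s (c *\<^sub>R x) = \<bar>c\<bar> * s x)"

definition seminorm_basic_sets :: "('a::real_vector \<Rightarrow> real) set \<Rightarrow> 'a set set" where
  "seminorm_basic_sets S =
     {{z. \<forall>s\<in>F. s (x - z) < \<delta>} | x F \<delta>. finite F \<and> F \<subseteq> S \<and> \<delta> > 0}"

definition seminorm_topology :: "('a::real_vector \<Rightarrow> real) set \<Rightarrow> 'a topology" where
  "seminorm_topology S = topology_generated_by (seminorm_basic_sets S)"

end

(*
  Fix x in Y. Compactness, together with countability of S, yields a subsequence f^(r k) x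
  converging to some p in Y; taking y = f x in the hypothesis, f^(r k + 1) x converges to p
  as well. For every K the set C = {p} u {f^(r k) x | k >= K} is compact, hence closed, so
  f(C) is closed in Y; it contains f^(r k + 1) x for k >= K and therefore their limit p. If
  f p were different from p, then p = f^(r k + 1) x for arbitrarily large k, so p would be
  periodic, f^c p = p with c > 0, and along the times n = j c the hypothesis would force
  s (p - f p) = 0 for every s in S, contradicting separation. Two fixed points have constant
  orbit differences, which must tend to 0; this gives uniqueness.
*)
theory Submission
  imports Defs
begin

definition seminorm_ball :: "('a::real_vector \<Rightarrow> real) set \<Rightarrow> 'a \<Rightarrow> real \<Rightarrow> 'a set" where
  "seminorm_ball F x \<delta> = {z. \<forall>s\<in>F. s (x - z) < \<delta>}"

lemma seminorm_zero: "seminorm s \<Longrightarrow> s 0 = 0"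
  unfolding seminorm_def by (metis abs_zero mult_zero_left scaleR_zero_left)

lemma seminorm_minus: "seminorm s \<Longrightarrow> s (- x) = s x"
  unfolding seminorm_def by (metis abs_minus_cancel abs_one mult_1 scaleR_minus1_left)

lemma seminorm_diff_commute: "seminorm s \<Longrightarrow> s (x - y) = s (y - x)"
  by (metis minus_diff_eq seminorm_minus)

lemma seminorm_diff_triangle: "seminorm s \<Longrightarrow> s (x - z) \<le> s (x - y) + s (y - z)"
  unfolding seminorm_def by (metis diff_add_cancel add_diff_eq)

lemma seminorm_nonneg: "seminorm s \<Longrightarrow> 0 \<le> s x"
  using seminorm_diff_triangle[of s x x 0] seminorm_diff_commute[of s x 0] seminorm_zero[of s]
  by simp

lemma seminorm_tendsto_0_diff_trans:
  assumes "seminorm s" "(\<lambda>k. s (x k - y k)) \<longlonglongrightarrow> 0" "(\<lambda>k. s (y k - z k)) \<longlonglongrightarrow> 0"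
  shows "(\<lambda>k. s (x k - z k)) \<longlonglongrightarrow> 0"
proof (rule Lim_null_comparison)
  show "\<forall>\<^sub>F k in sequentially. norm (s (x k - z k)) \<le> s (x k - y k) + s (y k - z k)"
    using assms(1) by (simp add: seminorm_nonneg seminorm_diff_triangle)
  show "(\<lambda>k. s (x k - y k) + s (y k - z k)) \<longlonglongrightarrow> 0"
    using tendsto_add_zero[OF assms(2,3)] .
qed

lemma seminorm_basic_sets_eq:
  "seminorm_basic_sets S = {seminorm_ball F x \<delta> | x F \<delta>. finite F \<and> F \<subseteq> S \<and> \<delta> > 0}"
  by (simp add: seminorm_basic_sets_def seminorm_ball_def)

lemma topspace_seminorm_topology [simp]: "topspace (seminorm_topology S) = UNIV"
proof -
  have "seminorm_ball {} 0 1 \<in> seminorm_basic_sets S"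
    unfolding seminorm_basic_sets_eq by force
  then show ?thesis
    by (auto simp: seminorm_topology_def seminorm_ball_def)
qed

lemma openin_seminorm_ball:
  "finite F \<Longrightarrow> F \<subseteq> S \<Longrightarrow> \<delta> > 0 \<Longrightarrow> openin (seminorm_topology S) (seminorm_ball F x \<delta>)"
  unfolding seminorm_topology_def openin_topology_generated_by_iff
  by (rule generate_topology_on.Basis) (auto simp: seminorm_basic_sets_eq)

lemma centre_in_seminorm_ball: "\<forall>s\<in>F. seminorm s \<Longrightarrow> \<delta> > 0 \<Longrightarrow> x \<in> seminorm_ball F x \<delta>"
  by (simp add: seminorm_ball_def seminorm_zero)

definition seminorm_open :: "('a::real_vector \<Rightarrow> real) set \<Rightarrow> 'a set \<Rightarrow> bool" where
  "seminorm_open S U \<longleftrightarrow> (\<forall>p\<in>U. \<exists>F \<delta>. finite F \<and> F \<subseteq> S \<and> \<delta> > 0 \<and> seminorm_ball F p \<delta> \<subseteq> U)"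

lemma seminorm_open_Int:
  assumes "seminorm_open S U" "seminorm_open S V"
  shows "seminorm_open S (U \<inter> V)"
  unfolding seminorm_open_def
proof
  fix p assume "p \<in> U \<inter> V"
  then obtain F \<delta> G \<epsilon> where
    "finite F" "F \<subseteq> S" "\<delta> > 0" "seminorm_ball F p \<delta> \<subseteq> U"
    "finite G" "G \<subseteq> S" "\<epsilon> > 0" "seminorm_ball G p \<epsilon> \<subseteq> V"
    using assms unfolding seminorm_open_def by (meson IntD1 IntD2)
  moreover have "seminorm_ball (F \<union> G) p (min \<delta> \<epsilon>) \<subseteq> seminorm_ball F p \<delta> \<inter> seminorm_ball G p \<epsilon>"
    by (auto simp: seminorm_ball_def)
  ultimately show "\<exists>F \<delta>. finite F \<and> F \<subseteq> S \<and> \<delta> > 0 \<and> seminorm_ball F p \<delta> \<subseteq> U \<inter> V"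
    by (intro exI[of _ "F \<union> G"] exI[of _ "min \<delta> \<epsilon>"]) auto
qed

lemma seminorm_open_Union:
  assumes "\<And>U. U \<in> K \<Longrightarrow> seminorm_open S U"
  shows "seminorm_open S (\<Union>K)"
  unfolding seminorm_open_def
proof
  fix p assume "p \<in> \<Union>K"
  then obtain U F \<delta> where "U \<in> K" "finite F" "F \<subseteq> S" "\<delta> > 0" "seminorm_ball F p \<delta> \<subseteq> U"
    using assms unfolding seminorm_open_def by (meson UnionE)
  then show "\<exists>F \<delta>. finite F \<and> F \<subseteq> S \<and> \<delta> > 0 \<and> seminorm_ball F p \<delta> \<subseteq> \<Union>K"
    by (meson Union_upper subset_trans)
qed

lemma seminorm_open_ball:
  assumes "\<forall>s\<in>F. seminorm s" "finite F" "F \<subseteq> S" "\<delta> > 0"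
  shows "seminorm_open S (seminorm_ball F x \<delta>)"
  unfolding seminorm_open_def
proof
  fix p assume p: "p \<in> seminorm_ball F x \<delta>"
  define m where "m = Max (insert 0 ((\<lambda>s. s (x - p)) ` F))"
  have m: "s (x - p) \<le> m" if "s \<in> F" for s
    unfolding m_def using assms(2) that by simp
  have "m < \<delta>"
    using assms(2,4) p unfolding m_def seminorm_ball_def by (simp add: Max_less_iff)
  moreover have "seminorm_ball F p (\<delta> - m) \<subseteq> seminorm_ball F x \<delta>"
  proof
    fix z assume z: "z \<in> seminorm_ball F p (\<delta> - m)"
    have "s (x - z) < \<delta>" if "s \<in> F" for s
    proof -
      have "s (x - z) \<le> s (x - p) + s (p - z)"
        using assms(1) that by (simp add: seminorm_diff_triangle)
      moreover have "s (p - z) < \<delta> - m"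
        using z that by (simp add: seminorm_ball_def)
      ultimately show ?thesis
        using m[OF that] by linarith
    qed
    then show "z \<in> seminorm_ball F x \<delta>"
      unfolding seminorm_ball_def by blast
  qed
  ultimately show "\<exists>G \<epsilon>. finite G \<and> G \<subseteq> S \<and> \<epsilon> > 0 \<and> seminorm_ball G p \<epsilon> \<subseteq> seminorm_ball F x \<delta>"
    using assms(2,3) by (intro exI[of _ F] exI[of _ "\<delta> - m"]) simp
qed

lemma openin_seminorm_topology_imp_seminorm_open:
  assumes "\<forall>s\<in>S. seminorm s" "openin (seminorm_topology S) U"
  shows "seminorm_open S U"
proof -
  have "generate_topology_on (seminorm_basic_sets S) U"
    using assms(2) unfolding seminorm_topology_def openin_topology_generated_by_iff .
  then show ?thesis
  proof induction
    case Empty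
    then show ?case by (simp add: seminorm_open_def)
  next
    case (Int U V)
    then show ?case by (intro seminorm_open_Int)
  next
    case (UN K)
    then show ?case by (intro seminorm_open_Union)
  next
    case (Basis B)
    then obtain x F \<delta> where "B = seminorm_ball F x \<delta>" "finite F" "F \<subseteq> S" "\<delta> > 0"
      unfolding seminorm_basic_sets_eq by blast
    moreover have "\<forall>s\<in>F. seminorm s"
      using \<open>F \<subseteq> S\<close> assms(1) by blast
    ultimately show ?case
      by (simp add: seminorm_open_ball)
  qed
qed

lemma limitin_seminorm_topology:
  assumes "\<forall>s\<in>S. seminorm s" "\<And>s. s \<in> S \<Longrightarrow> (\<lambda>k. s (p - z k)) \<longlonglongrightarrow> 0"
  shows "limitin (seminorm_topology S) z p sequentially"
  unfolding limitin_def
proof (intro conjI allI impI)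
  fix U assume "openin (seminorm_topology S) U \<and> p \<in> U"
  then obtain F \<delta> where F: "finite F" "F \<subseteq> S" "\<delta> > 0" "seminorm_ball F p \<delta> \<subseteq> U"
    using openin_seminorm_topology_imp_seminorm_open[OF assms(1)] unfolding seminorm_open_def
    by meson
  have "\<forall>\<^sub>F k in sequentially. \<forall>s\<in>F. s (p - z k) < \<delta>"
    using F assms(2) by (intro eventually_ball_finite ballI order_tendstoD(2)) auto
  then show "\<forall>\<^sub>F k in sequentially. z k \<in> U"
    by eventually_elim (use F(4) in \<open>auto simp: seminorm_ball_def\<close>)
qed simp

lemma Hausdorff_space_seminorm_topology:
  assumes "\<forall>s\<in>S. seminorm s" "\<forall>x y. x \<noteq> y \<longrightarrow> (\<exists>s\<in>S. s (x - y) \<noteq> 0)"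
  shows "Hausdorff_space (seminorm_topology S)"
  unfolding Hausdorff_space_def
proof (intro allI impI)
  fix x y :: 'a
  assume "x \<in> topspace (seminorm_topology S) \<and> y \<in> topspace (seminorm_topology S) \<and> x \<noteq> y"
  then obtain s where s: "s \<in> S" "s (x - y) \<noteq> 0"
    using assms(2) by blast
  then have s_seminorm: "seminorm s"
    using assms(1) by blast
  define \<epsilon> where "\<epsilon> = s (x - y) / 2"
  have "\<epsilon> > 0"
    using s seminorm_nonneg[OF s_seminorm, of "x - y"] unfolding \<epsilon>_def by linarith
  moreover have "disjnt (seminorm_ball {s} x \<epsilon>) (seminorm_ball {s} y \<epsilon>)"
    unfolding disjnt_def
  proof (rule equals0I)
    fix z assume "z \<in> seminorm_ball {s} x \<epsilon> \<inter> seminorm_ball {s} y \<epsilon>"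
    then show False
      using seminorm_diff_triangle[OF s_seminorm, of x y z] seminorm_diff_commute[OF s_seminorm, of y z]
      by (simp add: seminorm_ball_def \<epsilon>_def)
  qed
  moreover have "openin (seminorm_topology S) (seminorm_ball {s} u \<epsilon>)" for u
    using s \<open>\<epsilon> > 0\<close> by (simp add: openin_seminorm_ball)
  moreover have "x \<in> seminorm_ball {s} x \<epsilon>" "y \<in> seminorm_ball {s} y \<epsilon>"
    using s_seminorm \<open>\<epsilon> > 0\<close> by (simp_all add: centre_in_seminorm_ball)
  ultimately show "\<exists>U V. openin (seminorm_topology S) U \<and> openin (seminorm_topology S) V \<and>
      x \<in> U \<and> y \<in> V \<and> disjnt U V"
    by blast
qed

lemma compactin_sequence_has_cluster_point:
  assumes "compactin X Y" "range y \<subseteq> Y"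
  obtains p where "p \<in> Y"
    "\<And>U. openin X U \<Longrightarrow> p \<in> U \<Longrightarrow> frequently (\<lambda>n. y n \<in> U) sequentially"
proof -
  have "\<exists>p\<in>Y. \<forall>U. openin X U \<longrightarrow> p \<in> U \<longrightarrow> frequently (\<lambda>n. y n \<in> U) sequentially"
  proof (rule ccontr)
    assume "\<not> ?thesis"
    then have "\<forall>p\<in>Y. \<exists>U. openin X U \<and> p \<in> U \<and> eventually (\<lambda>n. y n \<notin> U) sequentially"
      by (simp add: not_frequently)
    then obtain U where U: "\<forall>p\<in>Y. openin X (U p) \<and> p \<in> U p \<and> eventually (\<lambda>n. y n \<notin> U p) sequentially"
      by (rule bchoice[THEN exE])
    then have "\<exists>\<F>. finite \<F> \<and> \<F> \<subseteq> U ` Y \<and> Y \<subseteq> \<Union>\<F>"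
      by (intro compactinD[OF assms(1)]) auto
    then obtain Q where Q: "finite Q" "Q \<subseteq> Y" "Y \<subseteq> \<Union>(U ` Q)"
      by (metis finite_subset_image)
    then have "eventually (\<lambda>n. \<forall>q\<in>Q. y n \<notin> U q) sequentially"
      using U by (intro eventually_ball_finite) auto
    then obtain n where "\<forall>q\<in>Q. y n \<notin> U q"
      using eventually_sequentially by auto
    moreover have "y n \<in> \<Union>(U ` Q)"
      using assms(2) Q(3) by blast
    ultimately show False
      by blast
  qed
  with that show ?thesis
    by blast
qed

lemma countable_frequently_small_imp_subseq_tendsto_0:
  fixes g :: "'i \<Rightarrow> nat \<Rightarrow> real"
  assumes "countable I"
    and small: "\<And>F \<epsilon>. finite F \<Longrightarrow> F \<subseteq> I \<Longrightarrow> \<epsilon> > 0 \<Longrightarrow> frequently (\<lambda>n. \<forall>i\<in>F. \<bar>g i n\<bar> < \<epsilon>) sequentially"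
  obtains r where "strict_mono r" "\<And>i. i \<in> I \<Longrightarrow> (\<lambda>k. g i (r k)) \<longlonglongrightarrow> 0"
proof (cases "I = {}")
  case True
  then show ?thesis
    using that[of id] by (simp add: strict_mono_def)
next
  case False
  define F where "F k = from_nat_into I ` {..k}" for k
  have F: "finite (F k)" "F k \<subseteq> I" for k
    unfolding F_def using False by (auto intro: from_nat_into)
  define P where "P k n \<longleftrightarrow> (\<forall>i\<in>F k. \<bar>g i n\<bar> < inverse (real (Suc k)))" for k n
  have P_after: "\<exists>n>m. P k n" for k m
  proof -
    have "frequently (P k) sequentially"
      unfolding P_def using small[OF F] by simp
    then obtain n where "n \<ge> Suc m" "P k n"
      unfolding frequently_sequentially by blast
    then show ?thesis
      by (intro exI[of _ n]) simp
  qed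
  have "\<exists>r. \<forall>k. P k (r k) \<and> r k < r (Suc k)"
  proof (rule dependent_nat_choice)
    show "\<exists>n. P 0 n"
      using P_after by blast
    show "\<exists>n. P (Suc k) n \<and> m < n" for m k
      using P_after by blast
  qed
  then obtain r where r: "\<And>k. P k (r k)" "\<And>k. r k < r (Suc k)"
    by blast
  show ?thesis
  proof
    show "strict_mono r"
      using r(2) by (simp add: strict_mono_Suc_iff)
  next
    fix i assume "i \<in> I"
    obtain j where j: "from_nat_into I j = i"
      using from_nat_into_surj[OF assms(1) \<open>i \<in> I\<close>] ..
    have "norm (g i (r k)) \<le> inverse (real (Suc k))" if "j \<le> k" for k
    proof -
      have "i \<in> F k"
        unfolding F_def using j that by blast
      then show ?thesis
        using r(1)[of k] unfolding P_def by (simp add: less_imp_le)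
    qed
    then have "\<forall>\<^sub>F k in sequentially. norm (g i (r k)) \<le> inverse (real (Suc k))"
      unfolding eventually_sequentially by blast
    then show "(\<lambda>k. g i (r k)) \<longlonglongrightarrow> 0"
      by (rule Lim_null_comparison[OF _ LIMSEQ_inverse_real_of_nat])
  qed
qed

lemma seminorm_compactin_convergent_subseq:
  fixes y :: "nat \<Rightarrow> 'a::real_vector"
  assumes "countable S" "\<forall>s\<in>S. seminorm s" "compactin (seminorm_topology S) Y" "range y \<subseteq> Y"
  obtains p r where "p \<in> Y" "strict_mono r" "\<And>s. s \<in> S \<Longrightarrow> (\<lambda>k. s (p - y (r k))) \<longlonglongrightarrow> 0"
proof -
  obtain p where "p \<in> Y" and cluster:
    "\<And>U. openin (seminorm_topology S) U \<Longrightarrow> p \<in> U \<Longrightarrow> frequently (\<lambda>n. y n \<in> U) sequentially"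
    using compactin_sequence_has_cluster_point[OF assms(3,4)] by blast
  have "frequently (\<lambda>n. \<forall>s\<in>F. \<bar>s (p - y n)\<bar> < \<epsilon>) sequentially"
    if "finite F" "F \<subseteq> S" "\<epsilon> > 0" for F \<epsilon>
  proof -
    have "frequently (\<lambda>n. y n \<in> seminorm_ball F p \<epsilon>) sequentially"
      using that assms(2) by (intro cluster openin_seminorm_ball centre_in_seminorm_ball) auto
    then show ?thesis
      by (rule frequently_elim1)
        (use that assms(2) in \<open>auto simp: seminorm_ball_def seminorm_nonneg subset_iff\<close>)
  qed
  then obtain r where "strict_mono r" "\<And>s. s \<in> S \<Longrightarrow> (\<lambda>k. s (p - y (r k))) \<longlonglongrightarrow> 0"
    using countable_frequently_small_imp_subseq_tendsto_0[OF assms(1), of "\<lambda>s n. s (p - y n)"]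
    by blast
  with \<open>p \<in> Y\<close> show ?thesis
    using that by blast
qed

lemma seminorm_orbit_subseq_limits:
  assumes "countable S" "\<forall>s\<in>S. seminorm s" "compactin (seminorm_topology S) Y"
    and "f ` Y \<subseteq> Y" "x \<in> Y"
    and "\<And>s. s \<in> S \<Longrightarrow> (\<lambda>n. s ((f ^^ n) x - (f ^^ n) (f x))) \<longlonglongrightarrow> 0"
  obtains p r where "p \<in> Y" "strict_mono r"
    "limitin (seminorm_topology S) (\<lambda>k. (f ^^ r k) x) p sequentially"
    "limitin (seminorm_topology S) (\<lambda>k. (f ^^ Suc (r k)) x) p sequentially"
proof -
  have "(f ^^ n) x \<in> Y" for n
    using assms(4,5) by (induction n) auto
  then obtain p r where "p \<in> Y" "strict_mono r"
    and conv: "\<And>s. s \<in> S \<Longrightarrow> (\<lambda>k. s (p - (f ^^ r k) x)) \<longlonglongrightarrow> 0"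
    using seminorm_compactin_convergent_subseq[OF assms(1-3), of "\<lambda>n. (f ^^ n) x"] by blast
  have conv_Suc: "(\<lambda>k. s (p - (f ^^ Suc (r k)) x)) \<longlonglongrightarrow> 0" if "s \<in> S" for s
  proof (rule seminorm_tendsto_0_diff_trans)
    show "(\<lambda>k. s ((f ^^ r k) x - (f ^^ Suc (r k)) x)) \<longlonglongrightarrow> 0"
      using LIMSEQ_subseq_LIMSEQ[OF assms(6)[OF that] \<open>strict_mono r\<close>]
      by (simp add: o_def funpow_swap1)
  qed (use that assms(2) conv in auto)
  show ?thesis
  proof (rule that[OF \<open>p \<in> Y\<close> \<open>strict_mono r\<close>])
    show "limitin (seminorm_topology S) (\<lambda>k. (f ^^ r k) x) p sequentially"
      using assms(2) conv by (rule limitin_seminorm_topology)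
    show "limitin (seminorm_topology S) (\<lambda>k. (f ^^ Suc (r k)) x) p sequentially"
      using assms(2) conv_Suc by (rule limitin_seminorm_topology)
  qed
qed

lemma closed_map_limit_in_image:
  assumes "Hausdorff_space X" "Y \<subseteq> topspace X" "f ` Y \<subseteq> Y"
    and "closed_map (subtopology X Y) (subtopology X Y) f"
    and "range \<sigma> \<subseteq> Y" "p \<in> Y"
    and "limitin X \<sigma> p sequentially" "limitin X (f \<circ> \<sigma>) p sequentially"
  shows "p \<in> f ` insert p (range \<sigma>)"
proof -
  have "compactin X (insert p (range \<sigma>))"
    using assms(2,5) by (intro compactin_sequence_with_limit[OF assms(7)]) auto
  then have "closedin X (insert p (range \<sigma>))"
    by (rule compactin_imp_closedin[OF assms(1)])
  then have "closedin (subtopology X Y) (insert p (range \<sigma>))"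
    using assms(5,6) by (simp add: closedin_subset_topspace)
  then have "closedin (subtopology X Y) (f ` insert p (range \<sigma>))"
    using assms(4) unfolding closed_map_def by blast
  moreover have "limitin (subtopology X Y) (f \<circ> \<sigma>) p sequentially"
    using assms(3,5,6,8) by (auto simp: limitin_subtopology intro!: always_eventually)
  ultimately show ?thesis
    by (intro limitin_closedin[of "subtopology X Y" "f \<circ> \<sigma>"]) auto
qed

lemma closed_map_orbit_limit_periodic:
  assumes "Hausdorff_space X" "Y \<subseteq> topspace X" "f ` Y \<subseteq> Y"
    and "closed_map (subtopology X Y) (subtopology X Y) f"
    and "x \<in> Y" "p \<in> Y" "strict_mono r"
    and "limitin X (\<lambda>k. (f ^^ r k) x) p sequentially"
    and "limitin X (\<lambda>k. (f ^^ Suc (r k)) x) p sequentially"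
    and "f p \<noteq> p"
  shows "\<exists>c>0. (f ^^ c) p = p"
proof -
  have orbit: "(f ^^ n) x \<in> Y" for n
    using assms(3,5) by (induction n) auto
  have returns: "\<exists>k\<ge>K. p = (f ^^ Suc (r k)) x" for K
  proof -
    have "p \<in> f ` insert p (range (\<lambda>k. (f ^^ r (k + K)) x))"
      using limitin_sequentially_offset[OF assms(8)] limitin_sequentially_offset[OF assms(9)]
      by (intro closed_map_limit_in_image[OF assms(1-4)]) (auto simp: orbit assms(6) o_def)
    then obtain k where "p = f ((f ^^ r (k + K)) x)"
      using assms(10) by auto
    then show ?thesis
      by (intro exI[of _ "k + K"]) simp
  qed
  obtain k0 where k0: "p = (f ^^ Suc (r k0)) x"
    using returns by blast
  obtain k1 where "k1 \<ge> Suc k0" and k1: "p = (f ^^ Suc (r k1)) x"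
    using returns by blast
  then have "r k0 < r k1"
    using assms(7) by (simp add: strict_mono_less)
  have "(f ^^ (r k1 - r k0)) p = (f ^^ (r k1 - r k0 + Suc (r k0))) x"
    unfolding funpow_add o_apply using k0 by simp
  also have "\<dots> = p"
    using \<open>r k0 < r k1\<close> k1 by simp
  finally show ?thesis
    using \<open>r k0 < r k1\<close> by (intro exI[of _ "r k1 - r k0"]) simp
qed

lemma periodic_point_fixed_if_orbits_asymptotic:
  fixes d :: "'a \<Rightarrow> 'a \<Rightarrow> real"
  assumes "(f ^^ c) p = p" "c > 0" "(\<lambda>n. d ((f ^^ n) p) ((f ^^ n) (f p))) \<longlonglongrightarrow> 0"
  shows "d p (f p) = 0"
proof -
  have "(\<lambda>j. d ((f ^^ (j * c)) p) ((f ^^ (j * c)) (f p))) \<longlonglongrightarrow> 0"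
    using LIMSEQ_subseq_LIMSEQ[OF assms(3), of "\<lambda>j. j * c"] assms(2)
    by (simp add: strict_mono_def o_def)
  moreover have "(f ^^ (j * c)) p = p" for j
    using funpow_mod_eq[OF assms(1), of "j * c"] by simp
  ultimately show ?thesis
    by (simp add: LIMSEQ_const_iff flip: funpow_swap1)
qed

lemma fixed_points_equal_if_orbits_asymptotic:
  fixes d :: "'a \<Rightarrow> 'a \<Rightarrow> real"
  assumes "f x = x" "f z = z" "(\<lambda>n. d ((f ^^ n) x) ((f ^^ n) z)) \<longlonglongrightarrow> 0"
  shows "d x z = 0"
proof -
  have "(f ^^ n) x = x" "(f ^^ n) z = z" for n
    using assms(1,2) by (induction n) auto
  then show ?thesis
    using assms(3) by (simp add: LIMSEQ_const_iff)
qed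

theorem theorem12:
  fixes S :: "('a::real_vector \<Rightarrow> real) set"
    and Y :: "'a set" and f :: "'a \<Rightarrow> 'a"
  assumes "countable S"
    and "\<forall>s\<in>S. seminorm s"
    and "\<forall>x y. x \<noteq> y \<longrightarrow> (\<exists>s\<in>S. s (x - y) \<noteq> 0)"
    and "compactin (seminorm_topology S) Y"
    and "Y \<noteq> {}"
    and "f ` Y \<subseteq> Y"
    and "closed_map (subtopology (seminorm_topology S) Y) (subtopology (seminorm_topology S) Y) f"
    and "\<forall>s\<in>S. \<forall>x\<in>Y. \<forall>y\<in>Y. (\<lambda>n. s ((f ^^ n) x - (f ^^ n) y)) \<longlonglongrightarrow> 0"
  shows "\<exists>!x. x \<in> Y \<and> f x = x"
proof -
  have separate: "x = y" if "\<And>s. s \<in> S \<Longrightarrow> s (x - y) = 0" for x y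
    using assms(3) that by blast
  obtain x0 where x0: "x0 \<in> Y"
    using assms(5) by blast
  obtain p r where p: "p \<in> Y" and r: "strict_mono r"
    and lim: "limitin (seminorm_topology S) (\<lambda>k. (f ^^ r k) x0) p sequentially"
      "limitin (seminorm_topology S) (\<lambda>k. (f ^^ Suc (r k)) x0) p sequentially"
    using seminorm_orbit_subseq_limits[OF assms(1,2,4,6) x0] assms(6,8) x0 by blast
  have "f p = p"
  proof (rule ccontr)
    assume "f p \<noteq> p"
    then obtain c where c: "(f ^^ c) p = p" "c > 0"
      using closed_map_orbit_limit_periodic[OF Hausdorff_space_seminorm_topology[OF assms(2,3)]
          _ assms(6,7) x0 p r lim] by auto
    have "s (p - f p) = 0" if "s \<in> S" for s
      by (rule periodic_point_fixed_if_orbits_asymptotic[where f = f and d = "\<lambda>u v. s (u - v)"])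
        (use c assms(6,8) p that in auto)
    with \<open>f p \<noteq> p\<close> show False
      using separate by metis
  qed
  moreover have "x = z" if fixed: "x \<in> Y" "f x = x" "z \<in> Y" "f z = z" for x z
  proof (rule separate)
    show "s (x - z) = 0" if "s \<in> S" for s
      by (rule fixed_points_equal_if_orbits_asymptotic[where f = f and d = "\<lambda>u v. s (u - v)"])
        (use assms(8) fixed that in auto)
  qed
  ultimately show ?thesis
    using p by blast
qed

end
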